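(* Let $X$ be any real random variable, $a\neq 0$, $N\sim\mathcal N(0,1)$ independent of $X$, and $Y=aX+N$. For $y\in\mathbb R$ let $X_y$ have distribution $P_{X\mid Y=y}$. Then for every $y\in\mathbb{R}$, $X_y$ is sub-Gaussian; moreover for all $x>0$, $$\Pr(|X_y|\ge x)\le \sqrt{\tfrac{2}{\pi}}\,\frac{e^{y^2/2}}{h_0(y;a)}\,e^{-a^2x^2/4},$$ for every $n=1,2,\dots$, $$\mathbb{E}|X_y|^n\le \frac{n\,e^{y^2/2}}{h_0(y;a)}\Big(\frac{\sqrt2}{|a|}\Big)^n\sqrt{(n-1)!},$$ and $\mathbb{E}\big|X_y-\mathbb{E}X_y\big|^n\le 2^n\,\mathbb{E}|X_y|^n$.
   Context: $\varphi(t)=(2\pi)^{-1/2}e^{-t^2/2}$ is the standard Gaussian density, and $h_0(y;a)=\mathbb{E}[\varphi(y-aX)]$ (the density of $Y=aX+N$ at $y$, which is strictly positive). A random variable $W$ is sub-Gaussian if there exist $c,C>0$ with $\Pr(|W|>\lambda)\le Ce^{-c\lambda^2}$ for all $\lambda>0$. *)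

theory Defs
  imports "HOL-Probability.Probability"
begin

definition std_gauss :: "real \<Rightarrow> real" where
  "std_gauss t = exp (- (t^2) / 2) / sqrt (2 * pi)"

definition h0 :: "real measure \<Rightarrow> real \<Rightarrow> real \<Rightarrow> real" where
  "h0 PX a y = (\<integral>x. std_gauss (y - a * x) \<partial>PX)"

text \<open>The law P_{X|Y=y} of X_y for Y = aX + N, N ~ N(0,1) independent of X
  (canonical version given by Bayes' formula: density phi(y - a x)/h0(y;a) w.r.t. P_X).\<close>
definition cond_law :: "real measure \<Rightarrow> real \<Rightarrow> real \<Rightarrow> real measure" where
  "cond_law PX a y = density PX (\<lambda>x. ennreal (std_gauss (y - a * x) / h0 PX a y))"

definition sub_gaussian :: "real measure \<Rightarrow> bool" where
  "sub_gaussian M \<longleftrightarrow> (\<exists>c>0. \<exists>C>0. \<forall>r>0.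
      measure M {w \<in> space M. \<bar>w\<bar> > r} \<le> C * exp (- c * r^2))"

end

theory Submission
  imports Defs
begin

(* By Bayes' formula (the definition cond_law) X_y has density
   g(t) = phi(y - a t) / h0(y;a) with respect to the prior P_X.  Completing the
   square, 2 y a t <= 2 y^2 + a^2 t^2 / 2, gives the pointwise Gaussian envelope
     g(t) <= K / sqrt(2 pi) * exp(- a^2 t^2 / 4),   K = exp(y^2/2) / h0(y;a),
   which does not depend on the prior.  Since P_X is a probability measure, every
   nonnegative function u with g * u <= B has integral at most B under X_y.
   Taking u the indicator of {|t| >= x} gives the tail bound (hence sub-Gaussianity);
   taking u = |t|^n and using |t|^n exp(-a^2 t^2/4) <= (sqrt 2/|a|)^n sqrt(n!),
   a consequence of v^n <= n! e^v, gives the moment bound.  The centred moment bound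
   holds for every probability law on the reals with the relevant moments: Jensen's
   inequality gives |E X|^n <= E|X|^n and convexity of u^n gives
   |X - E X|^n <= 2^(n-1) (|X|^n + |E X|^n). *)

text \<open>One term of the exponential series: \<open>v^n / n! \<le> e^v\<close> for \<open>v \<ge> 0\<close>.\<close>
lemma exp_ge_pow_fact:
  fixes v :: real
  assumes "0 \<le> v"
  shows "v ^ n / fact n \<le> exp v"
proof -
  have s: "(\<lambda>k. v ^ k / fact k) sums exp v"
    using exp_converges[of v] by (simp add: divide_inverse mult.commute)
  have "(\<Sum>k\<in>{n}. v ^ k / fact k) \<le> (\<Sum>k. v ^ k / fact k)"
    by (rule sum_le_suminf) (use s assms in \<open>auto simp: sums_summable\<close>)
  then show ?thesis
    using s sums_unique by fastforce
qed

text \<open>Convexity of \<open>u \<mapsto> u^n\<close> on \<open>[0,\<infinity>)\<close>: the graph lies above its tangent at \<open>c\<close>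
  (Bernoulli's inequality).\<close>
lemma pow_above_tangent:
  fixes u c :: real
  assumes "0 \<le> u" "0 \<le> c"
  shows "c ^ n + real n * c ^ (n - 1) * (u - c) \<le> u ^ n"
proof (cases "c = 0")
  case True
  then show ?thesis
    using assms by (cases n) (auto simp: power_0_left)
next
  case False
  then have c: "c > 0"
    using assms by auto
  have "c ^ n * (1 + real n * (u / c - 1)) \<le> c ^ n * (1 + (u / c - 1)) ^ n"
    using c assms by (intro mult_left_mono Bernoulli_inequality) auto
  also have "c ^ n * (1 + (u / c - 1)) ^ n = u ^ n"
    using c by (simp add: power_divide)
  also have "c ^ n * (1 + real n * (u / c - 1)) = c ^ n + real n * c ^ (n - 1) * (u - c)"
    using c by (cases n) (simp_all add: field_simps)
  finally show ?thesis .
qed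

text \<open>The supporting line of the convex function \<open>t \<mapsto> |t|^n\<close> at \<open>m\<close>; integrating it gives
  Jensen's inequality for absolute moments.\<close>
lemma abs_pow_above_support_line:
  fixes m t :: real
  shows "\<bar>m\<bar> ^ n + real n * \<bar>m\<bar> ^ (n - 1) * sgn m * (t - m) \<le> \<bar>t\<bar> ^ n"
proof -
  have "sgn m * (t - m) \<le> \<bar>t\<bar> - \<bar>m\<bar>"
    by (cases "m > 0"; cases "m = 0") (auto simp: sgn_if)
  then have "real n * \<bar>m\<bar> ^ (n - 1) * (sgn m * (t - m)) \<le> real n * \<bar>m\<bar> ^ (n - 1) * (\<bar>t\<bar> - \<bar>m\<bar>)"
    by (intro mult_left_mono) auto
  with pow_above_tangent[of "\<bar>t\<bar>" "\<bar>m\<bar>" n] show ?thesis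
    by (simp add: mult.assoc)
qed

text \<open>Power-mean inequality \<open>((u+v)/2)^n \<le> (u^n+v^n)/2\<close>, from the tangent at the midpoint.\<close>
lemma pow_sum_le:
  fixes u v :: real
  assumes "0 \<le> u" "0 \<le> v" "1 \<le> n"
  shows "(u + v) ^ n \<le> 2 ^ (n - 1) * (u ^ n + v ^ n)"
proof -
  define c where "c = (u + v) / 2"
  have c: "0 \<le> c"
    using assms unfolding c_def by simp
  have "c ^ n + real n * c ^ (n - 1) * (u - c) \<le> u ^ n"
    by (rule pow_above_tangent) (use assms c in auto)
  moreover have "c ^ n + real n * c ^ (n - 1) * (v - c) \<le> v ^ n"
    by (rule pow_above_tangent) (use assms c in auto)
  moreover have "real n * c ^ (n - 1) * (u - c) + real n * c ^ (n - 1) * (v - c) = 0"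
    unfolding c_def by (simp add: algebra_simps)
  ultimately have mid: "2 * c ^ n \<le> u ^ n + v ^ n"
    by linarith
  have "(2::real) ^ n = 2 * 2 ^ (n - 1)"
    using assms(3) by (cases n) simp_all
  then have "(u + v) ^ n = 2 ^ (n - 1) * (2 * c ^ n)"
    unfolding c_def by (simp add: power_divide)
  also have "\<dots> \<le> 2 ^ (n - 1) * (u ^ n + v ^ n)"
    using mid by (intro mult_left_mono) auto
  finally show ?thesis .
qed

text \<open>A polynomial times a Gaussian is bounded: with \<open>v = a^2 t^2 / 2\<close> the square of the
  left-hand side is \<open>(2/a^2)^n v^n e^{-v} \<le> (2/a^2)^n n!\<close>.\<close>
lemma pow_times_gauss_le:
  fixes a t :: real
  assumes "a \<noteq> 0"
  shows "\<bar>t\<bar> ^ n * exp (- (a^2 * t^2) / 4) \<le> (sqrt 2 / \<bar>a\<bar>) ^ n * sqrt (fact n)"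
proof -
  define v where "v = a^2 * t^2 / 2"
  have "v ^ n * exp (- v) \<le> fact n"
    using exp_ge_pow_fact[of v n] unfolding v_def by (simp add: exp_minus field_simps)
  then have bound: "(2 / a^2) ^ n * (v ^ n * exp (- v)) \<le> (2 / a^2) ^ n * fact n"
    by (intro mult_left_mono) auto
  have lhs: "(\<bar>t\<bar> ^ n * exp (- (a^2 * t^2) / 4))^2 = (2 / a^2) ^ n * (v ^ n * exp (- v))"
    using assms unfolding v_def
    by (simp add: field_simps power2_eq_square[symmetric]
        exp_double[symmetric] power_even_abs flip: power_mult)
  have rhs: "((sqrt 2 / \<bar>a\<bar>) ^ n * sqrt (fact n))^2 = (2 / a^2) ^ n * fact n"
  proof -
    have "(sqrt 2 / \<bar>a\<bar>)^2 = 2 / a^2"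
      by (simp add: power_divide)
    moreover have "((sqrt 2 / \<bar>a\<bar>) ^ n)^2 = ((sqrt 2 / \<bar>a\<bar>)^2) ^ n"
      by (metis power_mult mult.commute)
    ultimately show ?thesis
      by (simp add: power_mult_distrib)
  qed
  have "(\<bar>t\<bar> ^ n * exp (- (a^2 * t^2) / 4))^2 \<le> ((sqrt 2 / \<bar>a\<bar>) ^ n * sqrt (fact n))^2"
    using bound by (simp only: lhs rhs)
  then show ?thesis
    by (rule power2_le_imp_le) simp
qed

lemma sqrt_fact_le:
  assumes "1 \<le> n"
  shows "sqrt (fact n) \<le> real n * sqrt (fact (n - 1))"
proof -
  have "real n \<le> real n * real n"
    using assms by simp
  then have "sqrt (real n) \<le> sqrt (real n * real n)"
    by (rule real_sqrt_le_mono)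
  then have "sqrt (real n) \<le> real n"
    by simp
  then have "sqrt (real n) * sqrt (fact (n - 1)) \<le> real n * sqrt (fact (n - 1))"
    by (intro mult_right_mono) auto
  moreover have "sqrt (fact n) = sqrt (real n) * sqrt (fact (n - 1))"
    using assms by (simp add: fact_reduce real_sqrt_mult)
  ultimately show ?thesis
    by simp
qed

text \<open>Jensen's inequality for the convex function \<open>|t|^n\<close>: integrate its supporting line
  at the mean.\<close>
lemma abs_mean_pow_le:
  fixes M :: "real measure"
  assumes "prob_space M" "integrable M (\<lambda>t. t)" "integrable M (\<lambda>t. \<bar>t\<bar> ^ n)"
  shows "\<bar>\<integral>t. t \<partial>M\<bar> ^ n \<le> (\<integral>t. \<bar>t\<bar> ^ n \<partial>M)"
proof -
  interpret prob_space M by fact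
  define m where "m = (\<integral>t. t \<partial>M)"
  define k where "k = real n * \<bar>m\<bar> ^ (n - 1) * sgn m"
  have "(\<integral>t. \<bar>m\<bar> ^ n + k * (t - m) \<partial>M) = \<bar>m\<bar> ^ n + k * ((\<integral>t. t \<partial>M) - m)"
    using assms(2) by (simp add: prob_space)
  also have "\<dots> = \<bar>m\<bar> ^ n"
    unfolding m_def by simp
  finally have "\<bar>m\<bar> ^ n = (\<integral>t. \<bar>m\<bar> ^ n + k * (t - m) \<partial>M)" ..
  also have "\<dots> \<le> (\<integral>t. \<bar>t\<bar> ^ n \<partial>M)"
    using assms(2,3) abs_pow_above_support_line[of m n] unfolding k_def
    by (intro integral_mono) auto
  finally show ?thesis
    unfolding m_def .
qed

lemma centred_abs_moment_le:
  fixes M :: "real measure"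
  assumes "prob_space M" "integrable M (\<lambda>t. t)" "integrable M (\<lambda>t. \<bar>t\<bar> ^ n)" "1 \<le> n"
  shows "(\<integral>\<^sup>+ t. ennreal (\<bar>t - (\<integral>s. s \<partial>M)\<bar> ^ n) \<partial>M) \<le> 2 ^ n * (\<integral>\<^sup>+ t. ennreal (\<bar>t\<bar> ^ n) \<partial>M)"
proof -
  interpret prob_space M by fact
  define m where "m = (\<integral>s. s \<partial>M)"
  define E where "E = (\<integral>t. \<bar>t\<bar> ^ n \<partial>M)"
  have E: "(\<integral>\<^sup>+ t. ennreal (\<bar>t\<bar> ^ n) \<partial>M) = ennreal E" "0 \<le> E"
    unfolding E_def using assms(3) by (auto intro: nn_integral_eq_integral)
  have pointwise: "\<bar>t - m\<bar> ^ n \<le> 2 ^ (n - 1) * (\<bar>t\<bar> ^ n + \<bar>m\<bar> ^ n)" for t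
  proof -
    have "\<bar>t - m\<bar> ^ n \<le> (\<bar>t\<bar> + \<bar>m\<bar>) ^ n"
      by (rule power_mono) (auto simp: abs_triangle_ineq4)
    also have "\<dots> \<le> 2 ^ (n - 1) * (\<bar>t\<bar> ^ n + \<bar>m\<bar> ^ n)"
      by (rule pow_sum_le) (use assms(4) in auto)
    finally show ?thesis .
  qed
  have int: "integrable M (\<lambda>t. 2 ^ (n - 1) * (\<bar>t\<bar> ^ n + \<bar>m\<bar> ^ n))"
    using assms(3) by auto
  have "(\<integral>\<^sup>+ t. ennreal (\<bar>t - m\<bar> ^ n) \<partial>M) \<le> (\<integral>\<^sup>+ t. ennreal (2 ^ (n - 1) * (\<bar>t\<bar> ^ n + \<bar>m\<bar> ^ n)) \<partial>M)"
    using pointwise by (intro nn_integral_mono ennreal_leI)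
  also have "\<dots> = ennreal (2 ^ (n - 1) * (E + \<bar>m\<bar> ^ n))"
    using nn_integral_eq_integral[OF int] assms(3) unfolding E_def by (simp add: prob_space)
  also have "\<dots> \<le> ennreal (2 ^ (n - 1) * (E + E))"
    using abs_mean_pow_le[OF assms(1-3)] unfolding m_def E_def by (intro ennreal_leI) simp
  also have "2 ^ (n - 1) * (E + E) = 2 ^ n * E"
    using assms(4) by (cases n) simp_all
  also have "\<dots> = 2 ^ n * (\<integral>\<^sup>+ t. ennreal (\<bar>t\<bar> ^ n) \<partial>M)"
    using E by (simp add: ennreal_mult flip: ennreal_power)
  finally show ?thesis
    unfolding m_def .
qed

lemma nn_integral_density_le:
  assumes "prob_space M" "g \<in> borel_measurable M" "u \<in> borel_measurable M"
    and "\<And>t. t \<in> space M \<Longrightarrow> 0 \<le> g t" "\<And>t. t \<in> space M \<Longrightarrow> g t * u t \<le> B"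
  shows "(\<integral>\<^sup>+ t. ennreal (u t) \<partial>density M (\<lambda>t. ennreal (g t))) \<le> ennreal B"
proof -
  interpret prob_space M by fact
  have "(\<integral>\<^sup>+ t. ennreal (u t) \<partial>density M (\<lambda>t. ennreal (g t))) = (\<integral>\<^sup>+ t. ennreal (g t) * ennreal (u t) \<partial>M)"
    using assms(2,3) by (intro nn_integral_density) auto
  also have "\<dots> \<le> (\<integral>\<^sup>+ t. ennreal B \<partial>M)"
    using assms(4,5) by (intro nn_integral_mono) (simp add: ennreal_mult'[symmetric] ennreal_leI)
  also have "\<dots> = ennreal B"
    by (simp add: emeasure_space_1)
  finally show ?thesis .
qed

lemma std_gauss_pos: "0 < std_gauss t"
  unfolding std_gauss_def by simp

lemma std_gauss_le_1: "std_gauss t \<le> 1"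
proof -
  have "exp (- (t^2) / 2) \<le> 1"
    by simp
  moreover have "1 \<le> sqrt (2 * pi)"
    using pi_gt3 by simp
  ultimately have "exp (- (t^2) / 2) \<le> sqrt (2 * pi)"
    by linarith
  then show ?thesis
    unfolding std_gauss_def by simp
qed

text \<open>Gaussian envelope of the likelihood, uniform in the observation: completing the square,
  \<open>-(y - a t)^2/2 \<le> y^2/2 - a^2 t^2/4\<close> because \<open>(2y - a t)^2 \<ge> 0\<close>.\<close>
lemma std_gauss_envelope:
  fixes a y t :: real
  shows "std_gauss (y - a * t) \<le> exp (y^2 / 2) / sqrt (2 * pi) * exp (- (a^2 * t^2) / 4)"
proof -
  have "0 \<le> (2 * y - a * t)^2"
    by simp
  moreover have "(2 * y - a * t)^2 = 4 * y^2 - 4 * (a * t * y) + a^2 * t^2"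
    "(y - a * t)^2 = y^2 - 2 * (a * t * y) + a^2 * t^2"
    by (simp_all add: power2_eq_square algebra_simps)
  ultimately have "- ((y - a * t)^2) / 2 \<le> y^2 / 2 + - (a^2 * t^2) / 4"
    by linarith
  then have "exp (- ((y - a * t)^2) / 2) \<le> exp (y^2 / 2) * exp (- (a^2 * t^2) / 4)"
    by (simp flip: exp_add)
  then show ?thesis
    unfolding std_gauss_def by (simp add: divide_right_mono)
qed

lemma inv_sqrt_2pi_le: "1 / sqrt (2 * pi) \<le> sqrt (2 / pi)" "1 / sqrt (2 * pi) \<le> 1"
proof -
  have "1 / sqrt (2 * pi) = sqrt (1 / (2 * pi))"
    by (simp add: real_sqrt_divide)
  also have "\<dots> \<le> sqrt (2 / pi)"
    using pi_gt3 by (intro real_sqrt_le_mono) (simp add: field_simps)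
  finally show "1 / sqrt (2 * pi) \<le> sqrt (2 / pi)" .
  show "1 / sqrt (2 * pi) \<le> 1"
    using pi_gt3 by simp
qed

context
  fixes PX :: "real measure" and a y :: real
  assumes prior: "prob_space PX" and prior_sets: "sets PX = sets borel"
begin

interpretation prior: prob_space PX
  by (fact prior)

lemma likelihood_measurable [measurable]: "(\<lambda>t. std_gauss (y - a * t)) \<in> borel_measurable PX"
  unfolding measurable_cong_sets[OF prior_sets refl] std_gauss_def by measurable

lemma likelihood_integrable: "integrable PX (\<lambda>t. std_gauss (y - a * t))"
  by (rule prior.integrable_const_bound[where B = 1])
    (use std_gauss_le_1 std_gauss_pos in \<open>auto simp: less_imp_le\<close>)

lemma h0_pos: "0 < h0 PX a y"
proof -
  have "(\<integral>t. 0 \<partial>PX) < (\<integral>t. std_gauss (y - a * t) \<partial>PX)"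
    using likelihood_integrable std_gauss_pos prior.emeasure_space_1
    by (intro prior.integral_less_AE_space) auto
  then show ?thesis
    unfolding h0_def by simp
qed

lemma cond_law_sets: "sets (cond_law PX a y) = sets borel"
  unfolding cond_law_def by (simp add: prior_sets)

lemma cond_law_space: "space (cond_law PX a y) = UNIV"
  using sets_eq_imp_space_eq[OF cond_law_sets] by simp

lemma cond_law_prob_space: "prob_space (cond_law PX a y)"
proof
  have "emeasure (cond_law PX a y) (space (cond_law PX a y))
      = (\<integral>\<^sup>+ t. ennreal (std_gauss (y - a * t) / h0 PX a y) * indicator (space PX) t \<partial>PX)"
    unfolding cond_law_def by (subst emeasure_density) auto
  also have "\<dots> = (\<integral>\<^sup>+ t. ennreal (std_gauss (y - a * t) / h0 PX a y) \<partial>PX)"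
    by (rule nn_integral_cong) simp
  also have "\<dots> = ennreal (\<integral>t. std_gauss (y - a * t) / h0 PX a y \<partial>PX)"
    using likelihood_integrable h0_pos std_gauss_pos
    by (intro nn_integral_eq_integral) (auto simp: less_imp_le)
  also have "(\<integral>t. std_gauss (y - a * t) / h0 PX a y \<partial>PX) = 1"
    using h0_pos unfolding h0_def by simp
  finally show "emeasure (cond_law PX a y) (space (cond_law PX a y)) = 1"
    by simp
qed

lemma cond_law_nn_integral_le:
  assumes "u \<in> borel_measurable borel"
    and "\<And>t. exp (y^2 / 2) / h0 PX a y / sqrt (2 * pi) * exp (- (a^2 * t^2) / 4) * u t \<le> B"
    and "\<And>t. 0 \<le> u t"
  shows "(\<integral>\<^sup>+ t. ennreal (u t) \<partial>cond_law PX a y) \<le> ennreal B"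
  unfolding cond_law_def
proof (rule nn_integral_density_le[OF prior])
  show "u \<in> borel_measurable PX"
    using assms(1) by (simp add: measurable_cong_sets[OF prior_sets refl])
  show "0 \<le> std_gauss (y - a * t) / h0 PX a y" for t
    using h0_pos std_gauss_pos[of "y - a * t"] by simp
  show "std_gauss (y - a * t) / h0 PX a y * u t \<le> B" for t
  proof -
    have "std_gauss (y - a * t) / h0 PX a y
        \<le> exp (y^2 / 2) / h0 PX a y / sqrt (2 * pi) * exp (- (a^2 * t^2) / 4)"
      using std_gauss_envelope[of y a t] h0_pos by (simp add: divide_right_mono field_simps)
    then show ?thesis
      using assms(2)[of t] assms(3)[of t] by (meson mult_right_mono order_trans)
  qed
qed simp

lemma cond_law_tail:
  assumes "A \<in> sets borel" "A \<subseteq> {t. x \<le> \<bar>t\<bar>}" "0 \<le> x"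
  shows "measure (cond_law PX a y) A \<le> exp (y^2 / 2) / h0 PX a y / sqrt (2 * pi) * exp (- (a^2 * x^2) / 4)"
    (is "_ \<le> ?C * exp (- (a^2 * x^2) / 4)")
proof -
  have C: "0 \<le> ?C"
    using h0_pos by simp
  have "emeasure (cond_law PX a y) A = (\<integral>\<^sup>+ t. ennreal (indicator A t) \<partial>cond_law PX a y)"
    using assms(1) by (simp add: ennreal_indicator cond_law_sets)
  also have "\<dots> \<le> ennreal (?C * exp (- (a^2 * x^2) / 4))"
  proof (rule cond_law_nn_integral_le)
    show "?C * exp (- (a^2 * t^2) / 4) * indicator A t \<le> ?C * exp (- (a^2 * x^2) / 4)" for t
    proof (cases "t \<in> A")
      case True
      then have "x^2 \<le> t^2"
        using assms(2,3) abs_le_square_iff[of x t] by auto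
      then have "exp (- (a^2 * t^2) / 4) \<le> exp (- (a^2 * x^2) / 4)"
        by (simp add: mult_left_mono)
      then have "?C * exp (- (a^2 * t^2) / 4) \<le> ?C * exp (- (a^2 * x^2) / 4)"
        using C by (rule mult_left_mono)
      then show ?thesis
        using True by simp
    qed (use h0_pos in simp)
  qed (use assms(1) in auto)
  finally show ?thesis
    unfolding measure_def using h0_pos by (intro enn2real_leI) simp_all
qed

lemma cond_law_abs_moment:
  assumes "a \<noteq> 0"
  shows "(\<integral>\<^sup>+ t. ennreal (\<bar>t\<bar> ^ n) \<partial>cond_law PX a y)
    \<le> ennreal (exp (y^2 / 2) / h0 PX a y / sqrt (2 * pi) * ((sqrt 2 / \<bar>a\<bar>) ^ n * sqrt (fact n)))"
    (is "_ \<le> ennreal (?C * ?M)")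
proof (rule cond_law_nn_integral_le)
  have C: "0 \<le> ?C"
    using h0_pos by simp
  fix t
  have "?C * exp (- (a^2 * t^2) / 4) * \<bar>t\<bar> ^ n = ?C * (\<bar>t\<bar> ^ n * exp (- (a^2 * t^2) / 4))"
    by (simp only: mult_ac)
  also have "\<dots> \<le> ?C * ?M"
    using pow_times_gauss_le[OF assms] C by (rule mult_left_mono)
  finally show "?C * exp (- (a^2 * t^2) / 4) * \<bar>t\<bar> ^ n \<le> ?C * ?M" .
qed auto

lemma cond_law_integrable_abs_pow:
  assumes "a \<noteq> 0"
  shows "integrable (cond_law PX a y) (\<lambda>t. \<bar>t\<bar> ^ n)"
proof (rule integrableI_bounded)
  show "(\<lambda>t. \<bar>t\<bar> ^ n) \<in> borel_measurable (cond_law PX a y)"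
    by (simp add: measurable_cong_sets[OF cond_law_sets refl])
  show "(\<integral>\<^sup>+ t. ennreal (norm (\<bar>t\<bar> ^ n)) \<partial>cond_law PX a y) < \<infinity>"
    using cond_law_abs_moment[OF assms, of n] by (simp add: le_less_trans[OF _ ennreal_less_top])
qed

lemma cond_law_integrable:
  assumes "a \<noteq> 0"
  shows "integrable (cond_law PX a y) (\<lambda>t. t)"
  using cond_law_integrable_abs_pow[OF assms, of 1]
  by (simp add: integrable_abs_iff measurable_cong_sets[OF cond_law_sets refl])

end

theorem proposition6:
  fixes PX :: "real measure" and a y :: real
  assumes "prob_space PX" and "sets PX = sets borel" and "a \<noteq> 0"
  defines "Xy \<equiv> cond_law PX a y"
  shows "sub_gaussian Xy \<and>
    (\<forall>x>0. measure Xy {t \<in> space Xy. \<bar>t\<bar> \<ge> x}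
           \<le> sqrt (2 / pi) * exp (y^2 / 2) / h0 PX a y * exp (- (a^2 * x^2) / 4))
    \<and> (\<forall>n\<ge>1. (\<integral>\<^sup>+ t. ennreal (\<bar>t\<bar> ^ n) \<partial>Xy)
           \<le> ennreal (real n * exp (y^2 / 2) / h0 PX a y * (sqrt 2 / \<bar>a\<bar>) ^ n * sqrt (fact (n - 1))))
    \<and> (\<forall>n\<ge>1. (\<integral>\<^sup>+ t. ennreal (\<bar>t - (\<integral>s. s \<partial>Xy)\<bar> ^ n) \<partial>Xy)
           \<le> 2 ^ n * (\<integral>\<^sup>+ t. ennreal (\<bar>t\<bar> ^ n) \<partial>Xy))"
proof (intro conjI allI impI)
  let ?K = "exp (y^2 / 2) / h0 PX a y"
  have h: "0 < h0 PX a y"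
    using assms(1,2) by (rule h0_pos)
  then have K: "0 < ?K"
    by simp
  note tail = cond_law_tail[OF assms(1,2), where a = a and y = y, folded Xy_def]
  have space: "space Xy = UNIV"
    unfolding Xy_def using assms(1,2) by (rule cond_law_space)
  show "sub_gaussian Xy"
    unfolding sub_gaussian_def
  proof (intro exI conjI allI impI)
    show "0 < a^2 / 4" "0 < ?K / sqrt (2 * pi)"
      using assms(3) h by auto
    show "measure Xy {w \<in> space Xy. r < \<bar>w\<bar>} \<le> ?K / sqrt (2 * pi) * exp (- (a^2 / 4) * r^2)"
      if "0 < r" for r
      using tail[of "{w. r < \<bar>w\<bar>}" r] that by (simp add: space subset_eq)
  qed
  show "measure Xy {t \<in> space Xy. x \<le> \<bar>t\<bar>} \<le> sqrt (2 / pi) * exp (y^2 / 2) / h0 PX a y * exp (- (a^2 * x^2) / 4)"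
    if "0 < x" for x
  proof -
    have "?K / sqrt (2 * pi) \<le> sqrt (2 / pi) * ?K"
      using mult_right_mono[OF inv_sqrt_2pi_le(1), of ?K] K by (simp add: mult.commute[of "sqrt (2 * pi)"])
    then have "?K / sqrt (2 * pi) * exp (- (a^2 * x^2) / 4) \<le> sqrt (2 / pi) * ?K * exp (- (a^2 * x^2) / 4)"
      by (rule mult_right_mono) simp
    then show ?thesis
      using tail[of "{t. x \<le> \<bar>t\<bar>}" x] that by (simp add: space)
  qed
  show "(\<integral>\<^sup>+ t. ennreal (\<bar>t\<bar> ^ n) \<partial>Xy)
      \<le> ennreal (real n * exp (y^2 / 2) / h0 PX a y * (sqrt 2 / \<bar>a\<bar>) ^ n * sqrt (fact (n - 1)))"
    if "1 \<le> n" for n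
  proof -
    have "?K / sqrt (2 * pi) * ((sqrt 2 / \<bar>a\<bar>) ^ n * sqrt (fact n))
        \<le> ?K * ((sqrt 2 / \<bar>a\<bar>) ^ n * (real n * sqrt (fact (n - 1))))"
    proof (rule mult_mono)
      show "?K / sqrt (2 * pi) \<le> ?K"
        using mult_left_mono[OF inv_sqrt_2pi_le(2), of ?K] K by simp
      show "(sqrt 2 / \<bar>a\<bar>) ^ n * sqrt (fact n) \<le> (sqrt 2 / \<bar>a\<bar>) ^ n * (real n * sqrt (fact (n - 1)))"
        using sqrt_fact_le[OF that] by (rule mult_left_mono) simp
    qed (use K in simp_all)
    then show ?thesis
      using cond_law_abs_moment[OF assms(1-3), where y = y and n = n] unfolding Xy_def
      by (elim order_trans) (simp add: ennreal_leI mult_ac)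
  qed
  show "(\<integral>\<^sup>+ t. ennreal (\<bar>t - (\<integral>s. s \<partial>Xy)\<bar> ^ n) \<partial>Xy) \<le> 2 ^ n * (\<integral>\<^sup>+ t. ennreal (\<bar>t\<bar> ^ n) \<partial>Xy)"
    if "1 \<le> n" for n
    unfolding Xy_def using assms(1-3) that
    by (intro centred_abs_moment_le cond_law_prob_space cond_law_integrable cond_law_integrable_abs_pow)
qed

end
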